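(* Let $\mathcal G$ be a molecular graph and let $\mathcal S$ be a subset of its molecules such that the subgraph of $\mathcal G$ induced on $\mathcal S$ is doubly connected. Let $\mathcal G/\mathcal S$ be the quotient graph obtained from $\mathcal G$ by replacing all molecules of $\mathcal S$ by a single new molecule, deleting all edges with both endpoints in $\mathcal S$, and reattaching every edge of $\mathcal G$ joining a molecule of $\mathcal S$ to a molecule outside $\mathcal S$ to this new molecule (keeping its type). Then $\mathcal G$ is doubly connected if and only if $\mathcal G/\mathcal S$ is doubly connected.
   Context: A molecular graph is a finite multigraph whose vertices are called molecules and each of whose edges joins two distinct molecules and is either a diffusive edge or a blue solid edge (parallel edges are allowed). A molecular graph is doubly connected if there exist two disjoint sets of edges, $\mathcal B_{black}$ consisting only of diffusive edges and $\mathcal B_{blue}$ consisting only of blue solid or diffusive edges, such that each of $\mathcal B_{black}$ and $\mathcal B_{blue}$ contains a spanning tree of the set of all molecules. The subgraph induced on a set $\mathcal S$ of molecules consists of the molecules in $\mathcal S$ and all edges with both endpoints in $\mathcal S$. *)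

theory Defs
  imports Main
begin

text \<open>Molecular graphs: a finite set V of molecules, a finite set E of edge
identifiers (so parallel edges are allowed), an endpoint map ends assigning to
each edge the two-element set of molecules it joins, and a map kind giving the
type of each edge.\<close>

datatype edge_kind = Diffusive | BlueSolid

definition molecular_graph :: "'v set \<Rightarrow> 'e set \<Rightarrow> ('e \<Rightarrow> 'v set) \<Rightarrow> bool" where
  "molecular_graph V E ends \<longleftrightarrow> finite V \<and> finite E \<and>
     (\<forall>e\<in>E. ends e \<subseteq> V \<and> card (ends e) = 2)"

definition adj :: "('e \<Rightarrow> 'v set) \<Rightarrow> 'e set \<Rightarrow> ('v \<times> 'v) set" where
  "adj ends T = {(x, y). \<exists>e\<in>T. ends e = {x, y}}"

definition connected_by :: "'v set \<Rightarrow> ('e \<Rightarrow> 'v set) \<Rightarrow> 'e set \<Rightarrow> bool" where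
  "connected_by V ends T \<longleftrightarrow> (\<forall>u\<in>V. \<forall>v\<in>V. (u, v) \<in> (adj ends T)\<^sup>*)"

definition spanning_tree :: "'v set \<Rightarrow> ('e \<Rightarrow> 'v set) \<Rightarrow> 'e set \<Rightarrow> bool" where
  "spanning_tree V ends T \<longleftrightarrow> (\<forall>e\<in>T. ends e \<subseteq> V) \<and> connected_by V ends T \<and>
     (\<forall>e\<in>T. \<not> connected_by V ends (T - {e}))"

definition contains_spanning_tree :: "'v set \<Rightarrow> ('e \<Rightarrow> 'v set) \<Rightarrow> 'e set \<Rightarrow> bool" where
  "contains_spanning_tree V ends B \<longleftrightarrow> (\<exists>T\<subseteq>B. spanning_tree V ends T)"

definition doubly_connected ::
  "'v set \<Rightarrow> 'e set \<Rightarrow> ('e \<Rightarrow> 'v set) \<Rightarrow> ('e \<Rightarrow> edge_kind) \<Rightarrow> bool" where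
  "doubly_connected V E ends kind \<longleftrightarrow>
     (\<exists>Bblack Bblue. Bblack \<subseteq> E \<and> Bblue \<subseteq> E \<and> Bblack \<inter> Bblue = {} \<and>
        (\<forall>e\<in>Bblack. kind e = Diffusive) \<and>
        (\<forall>e\<in>Bblue. kind e = BlueSolid \<or> kind e = Diffusive) \<and>
        contains_spanning_tree V ends Bblack \<and> contains_spanning_tree V ends Bblue)"

definition induced_edges :: "'e set \<Rightarrow> ('e \<Rightarrow> 'v set) \<Rightarrow> 'v set \<Rightarrow> 'e set" where
  "induced_edges E ends S = {e\<in>E. ends e \<subseteq> S}"

text \<open>Quotient graph G/S: molecules are Some v for v outside S, plus the new
molecule None; edges inside S are deleted; other edges keep their identity and
type, endpoints in S being redirected to None.\<close>
definition qmap :: "'v set \<Rightarrow> 'v \<Rightarrow> 'v option" where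
  "qmap S v = (if v \<in> S then None else Some v)"

definition quot_vertices :: "'v set \<Rightarrow> 'v set \<Rightarrow> 'v option set" where
  "quot_vertices V S = insert None (Some ` (V - S))"

definition quot_edges :: "'e set \<Rightarrow> ('e \<Rightarrow> 'v set) \<Rightarrow> 'v set \<Rightarrow> 'e set" where
  "quot_edges E ends S = {e\<in>E. \<not> ends e \<subseteq> S}"

definition quot_ends :: "('e \<Rightarrow> 'v set) \<Rightarrow> 'v set \<Rightarrow> 'e \<Rightarrow> 'v option set" where
  "quot_ends ends S e = qmap S ` ends e"

end

theory Submission
  imports Defs
begin

text \<open>Since a finite connecting edge set contains a spanning tree, a graph is doubly connected
iff it has two disjoint connecting edge sets, the first consisting of diffusive edges.
Walks in \<open>G\<close> project to walks in \<open>G/S\<close>, so connecting sets of \<open>G\<close> project to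
connecting sets of \<open>G/S\<close>. Conversely, a walk in \<open>G/S\<close> lifts to \<open>G\<close> once every passage
through the new molecule is bridged by a walk inside \<open>S\<close>; hence a connecting set of \<open>G/S\<close>
together with a connecting set of the subgraph induced on \<open>S\<close> connects \<open>G\<close>. The edges of
\<open>G/S\<close> are exactly the edges of \<open>G\<close> not inside \<open>S\<close>, so disjoint pairs stay disjoint.\<close>

lemma adj_mono: "T \<subseteq> T' \<Longrightarrow> adj ends T \<subseteq> adj ends T'"
  unfolding adj_def by blast

lemma rtrancl_adj_mono:
  assumes "(x, y) \<in> (adj ends T)\<^sup>*" "T \<subseteq> T'"
  shows "(x, y) \<in> (adj ends T')\<^sup>*"
  using rtrancl_mono[OF adj_mono[OF assms(2)]] assms(1) by (rule subsetD)

lemma contains_spanning_tree_if_connected_by: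
  assumes "finite B" "\<forall>e\<in>B. ends e \<subseteq> V" "connected_by V ends B"
  shows "contains_spanning_tree V ends B"
  using assms
proof (induction "card B" arbitrary: B rule: less_induct)
  case less
  show ?case
  proof (cases "spanning_tree V ends B")
    case True
    then show ?thesis unfolding contains_spanning_tree_def by blast
  next
    case False
    then obtain e where e: "e \<in> B" "connected_by V ends (B - {e})"
      using less.prems unfolding spanning_tree_def by blast
    have "card (B - {e}) < card B"
      using less.prems(1) e(1) by (rule card_Diff1_less)
    then have "contains_spanning_tree V ends (B - {e})"
      using less e by simp
    then show ?thesis unfolding contains_spanning_tree_def by blast
  qed
qed

lemma doubly_connectedI:
  assumes "finite E" "\<forall>e\<in>E. ends e \<subseteq> V"
    and "B1 \<subseteq> E" "B2 \<subseteq> E" "B1 \<inter> B2 = {}" "\<forall>e\<in>B1. kind e = Diffusive"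
    and "connected_by V ends B1" "connected_by V ends B2"
  shows "doubly_connected V E ends kind"
proof -
  have "contains_spanning_tree V ends B1" "contains_spanning_tree V ends B2"
    using assms by (auto intro!: contains_spanning_tree_if_connected_by dest: finite_subset)
  moreover have "kind e = BlueSolid \<or> kind e = Diffusive" for e
    by (cases "kind e") auto
  ultimately show ?thesis
    using assms(3-6) unfolding doubly_connected_def by blast
qed

lemma doubly_connectedE:
  assumes "doubly_connected V E ends kind"
  obtains B1 B2 where "B1 \<subseteq> E" "B2 \<subseteq> E" "B1 \<inter> B2 = {}" "\<forall>e\<in>B1. kind e = Diffusive"
    "connected_by V ends B1" "connected_by V ends B2"
proof -
  obtain C1 C2 where C: "C1 \<subseteq> E" "C2 \<subseteq> E" "C1 \<inter> C2 = {}" "\<forall>e\<in>C1. kind e = Diffusive"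
    "contains_spanning_tree V ends C1" "contains_spanning_tree V ends C2"
    using assms unfolding doubly_connected_def by blast
  obtain B1 B2 where "B1 \<subseteq> C1" "B2 \<subseteq> C2" "spanning_tree V ends B1" "spanning_tree V ends B2"
    using C(5,6) unfolding contains_spanning_tree_def by blast
  with C(1-4) show ?thesis
    using that[of B1 B2] unfolding spanning_tree_def by blast
qed

lemma qmap_in_quot_vertices: "v \<in> V \<Longrightarrow> qmap S v \<in> quot_vertices V S"
  by (simp add: quot_vertices_def qmap_def)

lemma quot_vertices_eq_image:
  assumes "S \<subseteq> V" "S \<noteq> {}"
  shows "quot_vertices V S = qmap S ` V"
proof
  obtain s where "s \<in> S"
    using assms(2) by blast
  then have "None \<in> qmap S ` V"
    using assms(1) by (intro image_eqI[of _ _ s]) (auto simp: qmap_def)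
  moreover have "Some v \<in> qmap S ` V" if "v \<in> V - S" for v
    using that by (intro image_eqI[of _ _ v]) (auto simp: qmap_def)
  ultimately show "quot_vertices V S \<subseteq> qmap S ` V"
    unfolding quot_vertices_def by blast
  show "qmap S ` V \<subseteq> quot_vertices V S"
    by (rule image_subsetI) (rule qmap_in_quot_vertices)
qed

lemma quot_ends_subset: "ends e \<subseteq> V \<Longrightarrow> quot_ends ends S e \<subseteq> quot_vertices V S"
  unfolding quot_ends_def by (auto intro: qmap_in_quot_vertices)

lemma rtrancl_adj_quot:
  assumes "(x, y) \<in> (adj ends T)\<^sup>*"
  shows "(qmap S x, qmap S y) \<in> (adj (quot_ends ends S) (quot_edges T ends S))\<^sup>*"
  using assms
proof (induction rule: rtrancl_induct)
  case base
  then show ?case by simp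
next
  case (step y z)
  then obtain e where e: "e \<in> T" "ends e = {y, z}"
    unfolding adj_def by blast
  show ?case
  proof (cases "y \<in> S \<and> z \<in> S")
    case True
    then show ?thesis using step.IH by (simp add: qmap_def)
  next
    case False
    with e have "e \<in> quot_edges T ends S" "quot_ends ends S e = {qmap S y, qmap S z}"
      unfolding quot_edges_def quot_ends_def by auto
    then have "(qmap S y, qmap S z) \<in> adj (quot_ends ends S) (quot_edges T ends S)"
      unfolding adj_def by blast
    with step.IH show ?thesis by (rule rtrancl_into_rtrancl)
  qed
qed

lemma connected_by_quot:
  assumes "connected_by V ends T" "S \<subseteq> V" "S \<noteq> {}"
  shows "connected_by (quot_vertices V S) (quot_ends ends S) (quot_edges T ends S)"
  unfolding connected_by_def quot_vertices_eq_image[OF assms(2,3)]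
proof (intro ballI)
  fix a b assume "a \<in> qmap S ` V" "b \<in> qmap S ` V"
  then obtain x y where "x \<in> V" "y \<in> V" "a = qmap S x" "b = qmap S y"
    by blast
  with assms(1) show "(a, b) \<in> (adj (quot_ends ends S) (quot_edges T ends S))\<^sup>*"
    unfolding connected_by_def by (simp add: rtrancl_adj_quot)
qed

lemma rtrancl_adj_if_qmap_eq:
  assumes "connected_by S ends U" "qmap S x = qmap S y"
  shows "(x, y) \<in> (adj ends U)\<^sup>*"
proof (cases "x \<in> S")
  case True
  then have "y \<in> S"
    using assms(2) by (simp add: qmap_def split: if_splits)
  with True assms(1) show ?thesis
    unfolding connected_by_def by blast
next
  case False
  then have "x = y"
    using assms(2) by (simp add: qmap_def split: if_splits)
  then show ?thesis by simp
qed

lemma adj_quot_lift: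
  assumes "(b, c) \<in> adj (quot_ends ends S) T" "\<forall>e\<in>T. card (ends e) = 2"
  obtains p q where "(p, q) \<in> adj ends T" "qmap S p = b" "qmap S q = c"
proof -
  obtain e where e: "e \<in> T" "qmap S ` ends e = {b, c}"
    using assms(1) unfolding adj_def quot_ends_def by blast
  obtain p q where pq: "ends e = {p, q}"
    using assms(2) e(1) unfolding card_2_iff by blast
  then have "(p, q) \<in> adj ends T" "(q, p) \<in> adj ends T"
    using e(1) unfolding adj_def by auto
  moreover have "qmap S p = b \<and> qmap S q = c \<or> qmap S p = c \<and> qmap S q = b"
    using e(2) pq by (simp add: doubleton_eq_iff)
  ultimately show ?thesis
    using that by blast
qed

lemma rtrancl_adj_lift:
  assumes "(qmap S x, b) \<in> (adj (quot_ends ends S) T)\<^sup>*" "qmap S y = b"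
    and "connected_by S ends U" "\<forall>e\<in>T. card (ends e) = 2"
  shows "(x, y) \<in> (adj ends (T \<union> U))\<^sup>*"
  using assms(1,2)
proof (induction arbitrary: y rule: rtrancl_induct)
  case base
  then have "(x, y) \<in> (adj ends U)\<^sup>*"
    using assms(3) by (simp add: rtrancl_adj_if_qmap_eq)
  then show ?case
    by (rule rtrancl_adj_mono) blast
next
  case (step b c)
  obtain p q where pq: "(p, q) \<in> adj ends T" "qmap S p = b" "qmap S q = c"
    using adj_quot_lift[OF step.hyps(2) assms(4)] .
  have "(x, p) \<in> (adj ends (T \<union> U))\<^sup>*"
    using pq(2) by (rule step.IH)
  moreover have "(p, q) \<in> adj ends (T \<union> U)"
    using pq(1) adj_mono[of T "T \<union> U"] by blast
  moreover have "(q, y) \<in> (adj ends U)\<^sup>*"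
    using assms(3) pq(3) step.prems by (simp add: rtrancl_adj_if_qmap_eq)
  then have "(q, y) \<in> (adj ends (T \<union> U))\<^sup>*"
    by (rule rtrancl_adj_mono) blast
  ultimately show ?case
    by (meson converse_rtrancl_into_rtrancl rtrancl_trans)
qed

lemma connected_by_lift:
  assumes "connected_by (quot_vertices V S) (quot_ends ends S) T" "connected_by S ends U"
    and "\<forall>e\<in>T. card (ends e) = 2"
  shows "connected_by V ends (T \<union> U)"
  unfolding connected_by_def
proof (intro ballI)
  fix x y assume "x \<in> V" "y \<in> V"
  then have "qmap S x \<in> quot_vertices V S" "qmap S y \<in> quot_vertices V S"
    by (simp_all add: qmap_in_quot_vertices)
  then have "(qmap S x, qmap S y) \<in> (adj (quot_ends ends S) T)\<^sup>*"
    using assms(1) unfolding connected_by_def by blast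
  then show "(x, y) \<in> (adj ends (T \<union> U))\<^sup>*"
    using assms(2,3) by (rule rtrancl_adj_lift[OF _ refl])
qed

lemma doubly_connected_quot:
  assumes "molecular_graph V E ends" "S \<subseteq> V" "S \<noteq> {}" "doubly_connected V E ends kind"
  shows "doubly_connected (quot_vertices V S) (quot_edges E ends S) (quot_ends ends S) kind"
proof -
  obtain B1 B2 where B: "B1 \<subseteq> E" "B2 \<subseteq> E" "B1 \<inter> B2 = {}" "\<forall>e\<in>B1. kind e = Diffusive"
    "connected_by V ends B1" "connected_by V ends B2"
    using assms(4) by (rule doubly_connectedE)
  show ?thesis
  proof (rule doubly_connectedI)
    show "finite (quot_edges E ends S)"
      using assms(1) unfolding molecular_graph_def quot_edges_def by simp
    show "\<forall>e\<in>quot_edges E ends S. quot_ends ends S e \<subseteq> quot_vertices V S"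
    proof
      fix e assume "e \<in> quot_edges E ends S"
      then have "ends e \<subseteq> V"
        using assms(1) unfolding molecular_graph_def quot_edges_def by auto
      then show "quot_ends ends S e \<subseteq> quot_vertices V S"
        by (rule quot_ends_subset)
    qed
    show "quot_edges B1 ends S \<subseteq> quot_edges E ends S" "quot_edges B2 ends S \<subseteq> quot_edges E ends S"
      "quot_edges B1 ends S \<inter> quot_edges B2 ends S = {}"
      "\<forall>e\<in>quot_edges B1 ends S. kind e = Diffusive"
      using B(1-4) unfolding quot_edges_def by auto
    show "connected_by (quot_vertices V S) (quot_ends ends S) (quot_edges B1 ends S)"
      "connected_by (quot_vertices V S) (quot_ends ends S) (quot_edges B2 ends S)"
      using B(5,6) assms(2,3) by (auto intro: connected_by_quot)
  qed
qed

lemma doubly_connected_of_quot: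
  assumes "molecular_graph V E ends"
    and "doubly_connected S (induced_edges E ends S) ends kind"
    and "doubly_connected (quot_vertices V S) (quot_edges E ends S) (quot_ends ends S) kind"
  shows "doubly_connected V E ends kind"
proof -
  obtain U1 U2 where U: "U1 \<subseteq> induced_edges E ends S" "U2 \<subseteq> induced_edges E ends S"
    "U1 \<inter> U2 = {}" "\<forall>e\<in>U1. kind e = Diffusive" "connected_by S ends U1" "connected_by S ends U2"
    using assms(2) by (rule doubly_connectedE)
  obtain B1 B2 where B: "B1 \<subseteq> quot_edges E ends S" "B2 \<subseteq> quot_edges E ends S"
    "B1 \<inter> B2 = {}" "\<forall>e\<in>B1. kind e = Diffusive"
    "connected_by (quot_vertices V S) (quot_ends ends S) B1"
    "connected_by (quot_vertices V S) (quot_ends ends S) B2"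
    using assms(3) by (rule doubly_connectedE)
  have E: "finite E" "\<forall>e\<in>E. ends e \<subseteq> V" "\<forall>e\<in>E. card (ends e) = 2"
    using assms(1) unfolding molecular_graph_def by auto
  have card_B: "\<forall>e\<in>B1. card (ends e) = 2" "\<forall>e\<in>B2. card (ends e) = 2"
    using B(1,2) E(3) unfolding quot_edges_def by auto
  show ?thesis
  proof (rule doubly_connectedI[OF E(1,2)])
    show "B1 \<union> U1 \<subseteq> E" "B2 \<union> U2 \<subseteq> E" "(B1 \<union> U1) \<inter> (B2 \<union> U2) = {}"
      "\<forall>e\<in>B1 \<union> U1. kind e = Diffusive"
      using B(1-4) U(1-4) unfolding quot_edges_def induced_edges_def by auto
    show "connected_by V ends (B1 \<union> U1)" "connected_by V ends (B2 \<union> U2)"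
      using connected_by_lift[OF B(5) U(5) card_B(1)] connected_by_lift[OF B(6) U(6) card_B(2)] .
  qed
qed

theorem claimA1:
  fixes V :: "'v set" and E :: "'e set" and ends :: "'e \<Rightarrow> 'v set"
    and kind :: "'e \<Rightarrow> edge_kind" and S :: "'v set"
  assumes "molecular_graph V E ends"
    and "S \<subseteq> V" and "S \<noteq> {}"
    and "doubly_connected S (induced_edges E ends S) ends kind"
  shows "doubly_connected V E ends kind \<longleftrightarrow>
         doubly_connected (quot_vertices V S) (quot_edges E ends S) (quot_ends ends S) kind"
  using doubly_connected_quot[OF assms(1-3)] doubly_connected_of_quot[OF assms(1,4)] by blast

end
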